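(* Fix $0\le i\le n-1$, let $\kappa(p)=1\vee p$ and $\lambda(m)=1\vee m$, and define on $[t_i,t_{i+1})\times\mathbb R^{n-i}\times\mathbb R$ (restricted to arguments where the logarithms are defined) $$\phi(t,p_{i+1},\dots,p_n,m)=e^{t_{i+1}-t}\Big(1+\sum_{k=i+1}^n\ln(1+p_k)+\ln(1+m)\Big).$$ Let $v$ be a lower semi-continuous viscosity super-solution of $\sup_{(u,b)\in U\times\mathcal S_{d(n-i)+d}}\mathrm H^{u,b}_{\kappa,\lambda}v=0$ on $\mathrm{int}(\mathscr D_i)$. Then for every $\xi>0$ the function $v+\xi\phi$ satisfies, in the viscosity sense on $\mathrm{int}(\mathscr D_i)$, $$\sup_{(u,b)\in U\times\mathcal S_{d(n-i)+d}}\mathrm H^{u,b}_{\kappa,\lambda}(v+\xi\phi)\ge\frac{\xi}{8}.$$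
   Context: Setting. Fix integers $d,n\ge1$, $T>0$, a compact $U\subset\mathbb R^d$, and continuous $\mu:[0,T]\times\mathbb R^d\times U\to\mathbb R^d$, $\sigma:[0,T]\times\mathbb R^d\times U\to\mathbb R^{d\times d}$, Lipschitz in $z$ with linear growth in $z$ uniformly in $(t,u)$. Fix $0=t_0\le\dots\le t_n=T$; for $0\le i\le n-1$, $\mathscr C_i=[t_i,t_{i+1})\times\mathbb R^d\times\mathbb R^{n-i}$ and $\mathrm{int}(\mathscr D_i)=[t_i,t_{i+1})\times\mathbb R^d\times(0,\infty)^{n-i}\times(0,\infty)$. Here $\phi$ depends only on $(t,p,m)$ and is viewed as a function of $(t,z,p,m)$. Operators. For $\Theta=(t,z,p_{i+1},\dots,p_n,m,q,A)$ with $(t,z,p,m)\in\mathscr C_i\times\mathbb R$, $q=(q^z,q^{p_{i+1}},\dots,q^{p_n},q^m)\in\mathbb R^d\times\mathbb R^{n-i}\times\mathbb R$ and $A\in\mathbb S^{d+n-i+1}$ in blocks along $(z,p_{i+1},\dots,p_n,m)$: $A^{zz}\in\mathbb S^d$, $A^{zp_k},A^{zm}\in\mathbb R^d$, scalars $A^{p_kp_k},A^{p_km},A^{mm}$. For $u\in U$, $a=(a_{i+1},\dots,a_n)\in(\mathbb R^d)^{n-i}$, $e\in\mathbb R^d$, with $\mu=\mu(t,z,u)$, $\sigma=\sigma(t,z,u)$: $\mathrm L^{u,a,e}_{\kappa,\lambda}(\Theta)=-\mu^\top q^z-\tfrac12\mathrm{Tr}[\sigma\sigma^\top A^{zz}]-\lambda(m)e^\top\sigma^\top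 A^{zm}-\sum_k\kappa(p_k)a_k^\top\sigma^\top A^{zp_k}$, $\mathrm F^{a,e}_{\kappa,\lambda}(\Theta)=-\tfrac12\lambda(m)^2|e|^2A^{mm}-\tfrac12\sum_k\kappa(p_k)^2|a_k|^2A^{p_kp_k}-\lambda(m)\sum_k\kappa(p_k)e^\top a_kA^{p_km}$ (sums over $k=i+1,\dots,n$). $\mathcal S_{d(n-i)+d}$ is the unit sphere of $\mathbb R^{1+d(n-i)+d}$; $b=(b_1,b^\flat_{i+1},\dots,b^\flat_n,b^\sharp)$, $b^\flat=(b^\flat_{i+1},\dots,b^\flat_n)$. For $c\in\mathbb R$: if $b_1\neq0$, $\mathrm H^{u,b}_{\kappa,\lambda}(\Theta,c)=b_1^2(-c+\mathrm L^{u,b^\flat/b_1,b^\sharp/b_1}_{\kappa,\lambda}(\Theta)+\mathrm F^{b^\flat/b_1,b^\sharp/b_1}_{\kappa,\lambda}(\Theta))$; if $b_1=0$, $\mathrm H^{u,b}_{\kappa,\lambda}(\Theta,c)=\mathrm F^{b^\flat,b^\sharp}_{\kappa,\lambda}(\Theta)$. For smooth $\varphi$, $\mathrm H^{u,b}_{\kappa,\lambda}\varphi(x)=\mathrm H^{u,b}_{\kappa,\lambda}(x,\mathrm D\varphi(x),\mathrm D^2\varphi(x),\partial_t\varphi(x))$ with $\mathrm D,\mathrm D^2$ in $(z,p,m)$. Viscosity sense: a lower semi-continuous $g$ satisfies $\sup_{(u,b)}\mathrm H^{u,b}_{\kappa,\lambda}g\ge\gamma$ on $\mathrm{int}(\mathscr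 D_i)$ in the viscosity sense if for every $x_0\in\mathrm{int}(\mathscr D_i)$ and smooth $\varphi$ such that $g-\varphi$ attains a (strict) minimum over $\mathrm{int}(\mathscr D_i)$ equal to $0$ at $x_0$, $\sup_{(u,b)}\mathrm H^{u,b}_{\kappa,\lambda}\varphi(x_0)\ge\gamma$; a super-solution is the case $\gamma=0$. *)

theory Defs
  imports "HOL-Analysis.Analysis"
begin

text \<open>Spatial variable y = (z, p, m) with z in R^d (index type 'd), p = (p_(i+1),...,p_n)
 in R^(n-i) (index type 'k, CARD('k) = n - i) and m real.
 The gradient q in the (z,p,m) variables is represented as a linear functional on
 real^'d * real^'k * real, the symmetric matrix A as a bilinear form on that space;
 its blocks are A applied to the corresponding coordinate directions.\<close>

definition Lop ::
  "(real \<Rightarrow> real^'d \<Rightarrow> real^'d \<Rightarrow> real^'d) \<Rightarrow> (real \<Rightarrow> real^'d \<Rightarrow> real^'d \<Rightarrow> real^'d^'d)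
   \<Rightarrow> (real \<Rightarrow> real) \<Rightarrow> (real \<Rightarrow> real)
   \<Rightarrow> real \<Rightarrow> real^'d \<Rightarrow> real^'k \<Rightarrow> real
   \<Rightarrow> ((real^'d) \<times> (real^'k) \<times> real \<Rightarrow> real)
   \<Rightarrow> ((real^'d) \<times> (real^'k) \<times> real \<Rightarrow> (real^'d) \<times> (real^'k) \<times> real \<Rightarrow> real)
   \<Rightarrow> real^'d \<Rightarrow> (real^'d)^'k \<Rightarrow> real^'d \<Rightarrow> real" where
  "Lop mu sig kap lam t z p m q A u a e =
     - q (mu t z u, 0, 0)
     - (1/2) * (\<Sum>j\<in>UNIV. A (sig t z u *v axis j 1, 0, 0) (sig t z u *v axis j 1, 0, 0))
     - lam m * A (sig t z u *v e, 0, 0) (0, 0, 1)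
     - (\<Sum>k\<in>UNIV. kap (p $ k) * A (sig t z u *v (a $ k), 0, 0) (0, axis k 1, 0))"

definition Fop ::
  "(real \<Rightarrow> real) \<Rightarrow> (real \<Rightarrow> real) \<Rightarrow> real^'k \<Rightarrow> real
   \<Rightarrow> ((real^'d) \<times> (real^'k) \<times> real \<Rightarrow> (real^'d) \<times> (real^'k) \<times> real \<Rightarrow> real)
   \<Rightarrow> (real^'d)^'k \<Rightarrow> real^'d \<Rightarrow> real" where
  "Fop kap lam p m A a e =
     - (1/2) * (lam m)^2 * (norm e)^2 * A (0, 0, 1) (0, 0, 1)
     - (1/2) * (\<Sum>k\<in>UNIV. (kap (p $ k))^2 * (norm (a $ k))^2 * A (0, axis k 1, 0) (0, axis k 1, 0))
     - lam m * (\<Sum>k\<in>UNIV. kap (p $ k) * (e \<bullet> (a $ k)) * A (0, axis k 1, 0) (0, 0, 1))"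

definition Hop ::
  "(real \<Rightarrow> real^'d \<Rightarrow> real^'d \<Rightarrow> real^'d) \<Rightarrow> (real \<Rightarrow> real^'d \<Rightarrow> real^'d \<Rightarrow> real^'d^'d)
   \<Rightarrow> (real \<Rightarrow> real) \<Rightarrow> (real \<Rightarrow> real)
   \<Rightarrow> real \<Rightarrow> real^'d \<Rightarrow> real^'k \<Rightarrow> real
   \<Rightarrow> ((real^'d) \<times> (real^'k) \<times> real \<Rightarrow> real)
   \<Rightarrow> ((real^'d) \<times> (real^'k) \<times> real \<Rightarrow> (real^'d) \<times> (real^'k) \<times> real \<Rightarrow> real)
   \<Rightarrow> real \<Rightarrow> real^'d \<Rightarrow> real \<times> ((real^'d)^'k) \<times> (real^'d) \<Rightarrow> real" where
  "Hop mu sig kap lam t z p m q A c u b =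
     (let b1 = fst b; bf = fst (snd b); bs = snd (snd b) in
      if b1 \<noteq> 0 then
        b1^2 * (- c + Lop mu sig kap lam t z p m q A u ((1/b1) *\<^sub>R bf) ((1/b1) *\<^sub>R bs)
                    + Fop kap lam p m A ((1/b1) *\<^sub>R bf) ((1/b1) *\<^sub>R bs))
      else Fop kap lam p m A bf bs)"

definition C2_on ::
  "'a::real_normed_vector set \<Rightarrow> ('a \<Rightarrow> real) \<Rightarrow> ('a \<Rightarrow> 'a \<Rightarrow>\<^sub>L real)
   \<Rightarrow> ('a \<Rightarrow> 'a \<Rightarrow>\<^sub>L ('a \<Rightarrow>\<^sub>L real)) \<Rightarrow> bool" where
  "C2_on W f Df D2f \<longleftrightarrow> open W \<and>
     (\<forall>x\<in>W. (f has_derivative blinfun_apply (Df x)) (at x) \<and>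
            (Df has_derivative blinfun_apply (D2f x)) (at x)) \<and>
     continuous_on W D2f"

definition lsc_on :: "'a::metric_space set \<Rightarrow> ('a \<Rightarrow> real) \<Rightarrow> bool" where
  "lsc_on S g \<longleftrightarrow> (\<forall>x\<in>S. \<forall>e>0. \<exists>\<delta>>0. \<forall>y\<in>S. dist y x < \<delta> \<longrightarrow> g x - e < g y)"

text \<open>sup over (u,b) in U x unit sphere of H^{u,b} g >= gamma on Dom in the viscosity sense.
 For a test function phi at x0 = (t,(z,p,m)): gradient / Hessian in (z,p,m), c = d/dt phi.\<close>
definition visc_sup_ge ::
  "(real \<Rightarrow> real^'d \<Rightarrow> real^'d \<Rightarrow> real^'d) \<Rightarrow> (real \<Rightarrow> real^'d \<Rightarrow> real^'d \<Rightarrow> real^'d^'d)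
   \<Rightarrow> (real^'d) set \<Rightarrow> (real \<Rightarrow> real) \<Rightarrow> (real \<Rightarrow> real)
   \<Rightarrow> (real \<times> (real^'d) \<times> (real^'k) \<times> real) set
   \<Rightarrow> (real \<times> (real^'d) \<times> (real^'k) \<times> real \<Rightarrow> real) \<Rightarrow> real \<Rightarrow> bool" where
  "visc_sup_ge mu sig U kap lam Dom g \<gamma> \<longleftrightarrow>
     (\<forall>x0\<in>Dom. \<forall>W \<phi> D\<phi> D2\<phi>.
        C2_on W \<phi> D\<phi> D2\<phi> \<and> Dom \<subseteq> W \<and> g x0 - \<phi> x0 = 0 \<and>
        (\<forall>x\<in>Dom. g x0 - \<phi> x0 \<le> g x - \<phi> x) \<longrightarrow>
        ereal \<gamma> \<le> (SUP ub \<in> U \<times> sphere (0 :: real \<times> ((real^'d)^'k) \<times> (real^'d)) 1.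
           ereal (Hop mu sig kap lam (fst x0) (fst (snd x0)) (fst (snd (snd x0))) (snd (snd (snd x0)))
                    (\<lambda>w. blinfun_apply (D\<phi> x0) (0, w))
                    (\<lambda>w w'. blinfun_apply (blinfun_apply (D2\<phi> x0) (0, w)) (0, w'))
                    (blinfun_apply (D\<phi> x0) (1, 0))
                    (fst ub) (snd ub))))"

definition intD :: "(nat \<Rightarrow> real) \<Rightarrow> nat \<Rightarrow> (real \<times> (real^'d) \<times> (real^'k) \<times> real) set" where
  "intD tg i = {(t, z, p, m). tg i \<le> t \<and> t < tg (Suc i) \<and> (\<forall>k. 0 < p $ k) \<and> 0 < m}"

definition phi0 :: "(nat \<Rightarrow> real) \<Rightarrow> nat \<Rightarrow> real \<times> (real^'d) \<times> (real^'k) \<times> real \<Rightarrow> real" where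
  "phi0 tg i x = (case x of (t, z, p, m) \<Rightarrow>
     exp (tg (Suc i) - t) * (1 + (\<Sum>k\<in>UNIV. ln (1 + p $ k)) + ln (1 + m)))"

end

theory Submission
  imports Defs
begin

(* The operator H^{u,b} is linear in the derivatives (D, D^2, d/dt) of the test function. So if
   phi touches v + xi phi0 from below, then phi - xi phi0 touches v, and
   H^{u,b} phi = H^{u,b} (phi - xi phi0) + xi H^{u,b} phi0; it remains to show H^{u,b} phi0 >= 1/8
   for all (u,b). As phi0 does not depend on z, the part L vanishes and
   H^{u,b} phi0 = b_1^2 E s + F, with E = exp (t_{i+1} - t) >= 1 and s = 1 + sum ln (1 + p_k)
   + ln (1 + m) >= 1. Concavity of the logarithms makes F a positive quadratic form in
   (b^flat, b^sharp), and kappa(p)^2 / (1 + p)^2 >= 1/4 gives F >= E/8 (|b^flat|^2 + |b^sharp|^2);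
   with |b| = 1 this yields 1/8. *)

type_synonym ('d, 'k) point = "real \<times> (real^'d) \<times> (real^'k) \<times> real"

definition Hop_at ::
  "(real \<Rightarrow> real^'d \<Rightarrow> real^'d \<Rightarrow> real^'d) \<Rightarrow> (real \<Rightarrow> real^'d \<Rightarrow> real^'d \<Rightarrow> real^'d^'d)
   \<Rightarrow> (real \<Rightarrow> real) \<Rightarrow> (real \<Rightarrow> real)
   \<Rightarrow> ('d, 'k) point \<Rightarrow>\<^sub>L real \<Rightarrow> ('d, 'k) point \<Rightarrow>\<^sub>L (('d, 'k) point \<Rightarrow>\<^sub>L real)
   \<Rightarrow> ('d, 'k) point \<Rightarrow> (real^'d) \<times> real \<times> ((real^'d)^'k) \<times> (real^'d) \<Rightarrow> real" where
  "Hop_at mu sig kap lam D D2 x ub =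
     Hop mu sig kap lam (fst x) (fst (snd x)) (fst (snd (snd x))) (snd (snd (snd x)))
       (\<lambda>w. D (0, w)) (\<lambda>w w'. D2 (0, w) (0, w')) (D (1, 0)) (fst ub) (snd ub)"

lemma visc_sup_ge_iff:
  "visc_sup_ge mu sig U kap lam Dom g \<gamma> \<longleftrightarrow>
     (\<forall>x0\<in>Dom. \<forall>W \<phi> D\<phi> D2\<phi>.
        C2_on W \<phi> D\<phi> D2\<phi> \<and> Dom \<subseteq> W \<and> g x0 - \<phi> x0 = 0 \<and>
        (\<forall>x\<in>Dom. g x0 - \<phi> x0 \<le> g x - \<phi> x) \<longrightarrow>
        ereal \<gamma> \<le> (SUP ub \<in> U \<times> sphere 0 1. ereal (Hop_at mu sig kap lam (D\<phi> x0) (D2\<phi> x0) x0 ub)))"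
  unfolding visc_sup_ge_def Hop_at_def ..

lemma Lop_diff_scaled:
  "Lop mu sig kap lam t z p m (\<lambda>w. q1 w - \<xi> * q2 w) (\<lambda>w w'. A1 w w' - \<xi> * A2 w w') u a e
     = Lop mu sig kap lam t z p m q1 A1 u a e - \<xi> * Lop mu sig kap lam t z p m q2 A2 u a e"
  unfolding Lop_def by (simp add: sum_subtractf sum_distrib_left algebra_simps)

lemma Fop_diff_scaled:
  "Fop kap lam p m (\<lambda>w w'. A1 w w' - \<xi> * A2 w w') a e
     = Fop kap lam p m A1 a e - \<xi> * Fop kap lam p m A2 a e"
  unfolding Fop_def by (simp add: sum_subtractf sum_distrib_left algebra_simps)

lemma Hop_at_diff_scaled:
  "Hop_at mu sig kap lam (D1 - \<xi> *\<^sub>R D2) (H1 - \<xi> *\<^sub>R H2) x ub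
     = Hop_at mu sig kap lam D1 H1 x ub - \<xi> * Hop_at mu sig kap lam D2 H2 x ub"
  unfolding Hop_at_def Hop_def Let_def
  by (simp add: blinfun.diff_left blinfun.scaleR_left Lop_diff_scaled Fop_diff_scaled algebra_simps)

lemma C2_on_diff_scaled:
  assumes "C2_on W f Df D2f" and "C2_on V g Dg D2g"
  shows "C2_on (W \<inter> V) (\<lambda>x. f x - \<xi> * g x) (\<lambda>x. Df x - \<xi> *\<^sub>R Dg x) (\<lambda>x. D2f x - \<xi> *\<^sub>R D2g x)"
  using assms unfolding C2_on_def
  by (auto intro!: derivative_eq_intros continuous_on_diff continuous_on_scaleR continuous_on_const
      intro: continuous_on_subset simp: blinfun.diff_left blinfun.scaleR_left)

lemma visc_sup_ge_add_smooth:
  fixes f :: "('d::finite, 'k::finite) point \<Rightarrow> real"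
  assumes g: "visc_sup_ge mu sig U kap lam Dom g \<gamma>"
    and f: "C2_on V f Df D2f" and Dom_V: "Dom \<subseteq> V" and \<xi>: "\<xi> \<ge> 0"
    and f_bound: "\<And>x ub. x \<in> Dom \<Longrightarrow> ub \<in> U \<times> sphere 0 1 \<Longrightarrow>
                    \<delta> \<le> Hop_at mu sig kap lam (Df x) (D2f x) x ub"
  shows "visc_sup_ge mu sig U kap lam Dom (\<lambda>x. g x + \<xi> * f x) (\<gamma> + \<xi> * \<delta>)"
  unfolding visc_sup_ge_iff
proof (intro ballI allI impI)
  fix x0 W \<phi> D\<phi> D2\<phi>
  assume x0: "x0 \<in> Dom"
    and test: "C2_on W \<phi> D\<phi> D2\<phi> \<and> Dom \<subseteq> W \<and> g x0 + \<xi> * f x0 - \<phi> x0 = 0 \<and>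
      (\<forall>x\<in>Dom. g x0 + \<xi> * f x0 - \<phi> x0 \<le> g x + \<xi> * f x - \<phi> x)"
  define S where "S = U \<times> sphere (0 :: real \<times> ((real^'d)^'k) \<times> (real^'d)) 1"
  let ?H = "\<lambda>D D2 ub. Hop_at mu sig kap lam D D2 x0 ub"
  let ?D\<psi> = "D\<phi> x0 - \<xi> *\<^sub>R Df x0" and ?D2\<psi> = "D2\<phi> x0 - \<xi> *\<^sub>R D2f x0"
  define \<psi> where "\<psi> x = \<phi> x - \<xi> * f x" for x
  have "C2_on (W \<inter> V) \<psi> (\<lambda>x. D\<phi> x - \<xi> *\<^sub>R Df x) (\<lambda>x. D2\<phi> x - \<xi> *\<^sub>R D2f x)
      \<and> Dom \<subseteq> W \<inter> V \<and> g x0 - \<psi> x0 = 0 \<and> (\<forall>x\<in>Dom. g x0 - \<psi> x0 \<le> g x - \<psi> x)"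
    using C2_on_diff_scaled[of W \<phi> D\<phi> D2\<phi>] test f Dom_V unfolding \<psi>_def[abs_def]
    by (auto simp: algebra_simps)
  from g[unfolded visc_sup_ge_iff, rule_format, OF x0 this]
  have sup_\<psi>: "ereal \<gamma> \<le> (SUP ub\<in>S. ereal (?H ?D\<psi> ?D2\<psi> ub))"
    unfolding S_def .
  have S_nonempty: "S \<noteq> {}"
    using sup_\<psi> by (auto simp: bot_ereal_def)
  have pointwise: "ereal (?H ?D\<psi> ?D2\<psi> ub) + ereal (\<xi> * \<delta>) \<le> ereal (?H (D\<phi> x0) (D2\<phi> x0) ub)"
    if "ub \<in> S" for ub
  proof -
    have "\<xi> * \<delta> \<le> \<xi> * ?H (Df x0) (D2f x0) ub"
      using f_bound[OF x0] that \<xi> unfolding S_def by (simp add: mult_left_mono)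
    then show ?thesis by (simp add: Hop_at_diff_scaled)
  qed
  have "ereal (\<gamma> + \<xi> * \<delta>) = ereal \<gamma> + ereal (\<xi> * \<delta>)"
    by simp
  also have "\<dots> \<le> (SUP ub\<in>S. ereal (?H ?D\<psi> ?D2\<psi> ub)) + ereal (\<xi> * \<delta>)"
    using sup_\<psi> by (rule add_right_mono)
  also have "\<dots> = (SUP ub\<in>S. ereal (?H ?D\<psi> ?D2\<psi> ub) + ereal (\<xi> * \<delta>))"
    by (rule SUP_ereal_add_left[OF S_nonempty, symmetric]) simp
  also have "\<dots> \<le> (SUP ub\<in>S. ereal (?H (D\<phi> x0) (D2\<phi> x0) ub))"
    using pointwise by (intro SUP_mono) blast
  finally show "ereal (\<gamma> + \<xi> * \<delta>) \<le> (SUP ub\<in>U \<times> sphere 0 1. ereal (?H (D\<phi> x0) (D2\<phi> x0) ub))"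
    unfolding S_def .
qed

(* The (z, p, m)-gradient and Hessian of E (1 + sum_k ln (1 + p_k) + ln (1 + m)). *)
definition log_grad :: "real \<Rightarrow> real^'k \<Rightarrow> real \<Rightarrow> (real^'d) \<times> (real^'k) \<times> real \<Rightarrow> real" where
  "log_grad E p m w = (\<Sum>k\<in>UNIV. E / (1 + p$k) * fst (snd w) $ k) + E / (1 + m) * snd (snd w)"

definition log_hess ::
  "real \<Rightarrow> real^'k \<Rightarrow> real \<Rightarrow> (real^'d) \<times> (real^'k) \<times> real \<Rightarrow> (real^'d) \<times> (real^'k) \<times> real \<Rightarrow> real" where
  "log_hess E p m w w' =
     - (\<Sum>k\<in>UNIV. E / (1 + p$k)^2 * fst (snd w) $ k * fst (snd w') $ k)
     - E / (1 + m)^2 * snd (snd w) * snd (snd w')"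

lemma Fop_scaleR:
  "Fop kap lam p m A (r *\<^sub>R a) (r *\<^sub>R e) = r^2 * Fop kap lam p m A a e"
proof -
  have diag: "(\<Sum>k\<in>UNIV. (kap (p $ k))^2 * (norm ((r *\<^sub>R a) $ k))^2 * A (0, axis k 1, 0) (0, axis k 1, 0))
      = r^2 * (\<Sum>k\<in>UNIV. (kap (p $ k))^2 * (norm (a $ k))^2 * A (0, axis k 1, 0) (0, axis k 1, 0))"
    by (simp add: sum_distrib_left power_mult_distrib mult_ac)
  have cross: "(\<Sum>k\<in>UNIV. kap (p $ k) * ((r *\<^sub>R e) \<bullet> (r *\<^sub>R a) $ k) * A (0, axis k 1, 0) (0, 0, 1))
      = r^2 * (\<Sum>k\<in>UNIV. kap (p $ k) * (e \<bullet> a $ k) * A (0, axis k 1, 0) (0, 0, 1))"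
    by (simp add: sum_distrib_left power2_eq_square mult_ac)
  show ?thesis
    unfolding Fop_def diag cross by (simp add: algebra_simps)
qed

lemma Lop_log_test:
  "Lop mu sig kap lam t z p m (log_grad E p m) (log_hess E p m :: (real^'d) \<times> (real^'k) \<times> real \<Rightarrow> _) u a e = 0"
  unfolding Lop_def log_grad_def log_hess_def by simp

lemma Hop_log_test:
  fixes b :: "real \<times> ((real^'d)^'k) \<times> (real^'d)"
  shows "Hop mu sig kap lam t z p m (log_grad E p m) (log_hess E p m) c u b
     = Fop kap lam p m (log_hess E p m) (fst (snd b)) (snd (snd b)) - (fst b)^2 * c"
proof (cases "fst b = 0")
  case True
  then show ?thesis by (simp add: Hop_def)
next
  case False
  let ?F = "Fop kap lam p m (log_hess E p m)"
  have "Hop mu sig kap lam t z p m (log_grad E p m) (log_hess E p m) c u b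
      = (fst b)^2 * ?F ((1 / fst b) *\<^sub>R fst (snd b)) ((1 / fst b) *\<^sub>R snd (snd b)) - (fst b)^2 * c"
    using False by (simp add: Hop_def Let_def Lop_log_test algebra_simps)
  also have "\<dots> = ?F (fst (snd b)) (snd (snd b)) - (fst b)^2 * c"
    using False by (simp add: Fop_scaleR power_divide)
  finally show ?thesis .
qed

lemma max_one_sq_ratio_ge:
  fixes x E :: real
  assumes "x > 0" and "E \<ge> 0"
  shows "E / 4 \<le> (max 1 x)^2 * E / (1 + x)^2"
proof -
  have "(1 + x)^2 \<le> (2 * max 1 x)^2"
    using assms by (intro power_mono) auto
  then have "E * (1 + x)^2 \<le> E * (4 * (max 1 x)^2)"
    using assms by (intro mult_left_mono) (auto simp: power_mult_distrib)
  then show ?thesis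
    using assms by (simp add: field_simps)
qed

lemma Fop_log_hess_ge:
  fixes p :: "real^'k" and e :: "real^'d"
  assumes E: "E \<ge> 0" and p: "\<And>k. p$k > 0" and m: "m > 0"
  shows "E / 8 * ((norm e)^2 + (\<Sum>k\<in>UNIV. (norm (a$k))^2))
    \<le> Fop (\<lambda>p. max 1 p) (\<lambda>m. max 1 m) p m (log_hess E p m :: (real^'d) \<times> _ \<Rightarrow> _) a e"
proof -
  have hess_p: "log_hess E p m (0 :: real^'d, axis k 1, 0) (0, axis k 1, 0) = - E / (1 + p$k)^2" for k
    by (simp add: log_hess_def axis_def if_distrib cong: if_cong)
  have hess_m: "log_hess E p m (0 :: real^'d, 0, 1) (0, 0, 1) = - E / (1 + m)^2"
    and hess_pm: "log_hess E p m (0 :: real^'d, axis k 1, 0) (0, 0, 1) = 0" for k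
    by (simp_all add: log_hess_def)
  have "E / 8 * ((norm e)^2 + (\<Sum>k\<in>UNIV. (norm (a$k))^2))
      = 1/2 * ((norm e)^2 * (E / 4)) + 1/2 * (\<Sum>k\<in>UNIV. (norm (a$k))^2 * (E / 4))"
    unfolding sum_distrib_right[symmetric] by (simp add: algebra_simps)
  also have "\<dots> \<le> 1/2 * ((norm e)^2 * ((max 1 m)^2 * E / (1 + m)^2))
      + 1/2 * (\<Sum>k\<in>UNIV. (norm (a$k))^2 * ((max 1 (p$k))^2 * E / (1 + p$k)^2))"
    using max_one_sq_ratio_ge[OF m E] max_one_sq_ratio_ge[OF p E]
    by (intro add_mono mult_left_mono sum_mono) auto
  also have "\<dots> = Fop (\<lambda>p. max 1 p) (\<lambda>m. max 1 m) p m (log_hess E p m :: (real^'d) \<times> _ \<Rightarrow> _) a e"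
    unfolding Fop_def hess_p hess_m hess_pm by (simp add: sum_negf algebra_simps)
  finally show ?thesis .
qed

lemma norm_triple_sq:
  fixes b :: "real \<times> ((real^'d)^'k) \<times> (real^'d)"
  shows "(norm b)^2 = (fst b)^2 + (norm (snd (snd b)))^2 + (\<Sum>k\<in>UNIV. (norm (fst (snd b) $ k))^2)"
  unfolding norm_prod_def norm_vec_def L2_set_def
  by (simp add: sum_nonneg)

lemma Hop_log_test_ge:
  fixes p :: "real^'k" and b :: "real \<times> ((real^'d)^'k) \<times> (real^'d)"
  assumes E: "E \<ge> 1" and s: "s \<ge> 1" and p: "\<And>k. p$k > 0" and m: "m > 0" and b: "norm b = 1"
  shows "1/8 \<le> Hop mu sig (\<lambda>p. max 1 p) (\<lambda>m. max 1 m) t z p m (log_grad E p m) (log_hess E p m) (- (E * s)) u b"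
proof -
  define N where "N = (norm (snd (snd b)))^2 + (\<Sum>k\<in>UNIV. (norm (fst (snd b) $ k))^2)"
  have N: "(fst b)^2 + N = 1" "N \<ge> 0"
    using b norm_triple_sq[of b] unfolding N_def by (auto intro!: add_nonneg_nonneg sum_nonneg)
  have "1 \<le> E * s"
    using E s by (metis mult_mono mult_1 zero_le_one order_trans)
  have "1/8 \<le> (fst b)^2 * 1 + 1/8 * N"
    using N zero_le_power2[of "fst b"] by linarith
  also have "\<dots> \<le> (fst b)^2 * (E * s) + E / 8 * N"
    using \<open>1 \<le> E * s\<close> E N(2) by (intro add_mono mult_left_mono mult_right_mono) auto
  also have "\<dots> \<le> (fst b)^2 * (E * s) + Fop (\<lambda>p. max 1 p) (\<lambda>m. max 1 m) p m (log_hess E p m) (fst (snd b)) (snd (snd b))"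
    unfolding N_def using E p m by (intro add_left_mono Fop_log_hess_ge) auto
  also have "\<dots> = Hop mu sig (\<lambda>p. max 1 p) (\<lambda>m. max 1 m) t z p m (log_grad E p m) (log_hess E p m) (- (E * s)) u b"
    by (simp add: Hop_log_test)
  finally show ?thesis .
qed

definition p_coord :: "'k \<Rightarrow> ('d::finite, 'k::finite) point \<Rightarrow>\<^sub>L real" where
  "p_coord k = Blinfun (\<lambda>x. fst (snd (snd x)) $ k)"

definition m_coord :: "('d::finite, 'k::finite) point \<Rightarrow>\<^sub>L real" where
  "m_coord = Blinfun (\<lambda>x. snd (snd (snd x)))"

lemma p_coord_apply [simp]: "p_coord k (x :: ('d::finite, 'k::finite) point) = fst (snd (snd x)) $ k"
proof -
  have "bounded_linear (\<lambda>x :: ('d, 'k) point. fst (snd (snd x)) $ k)"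
    by (intro bounded_linear_compose[OF bounded_linear_vec_nth] bounded_linear_intros)
  then show ?thesis
    unfolding p_coord_def by (simp add: bounded_linear_Blinfun_apply)
qed

lemma m_coord_apply [simp]: "m_coord (x :: ('d::finite, 'k::finite) point) = snd (snd (snd x))"
proof -
  have "bounded_linear (\<lambda>x :: ('d, 'k) point. snd (snd (snd x)))"
    by (intro bounded_linear_intros)
  then show ?thesis
    unfolding m_coord_def by (simp add: bounded_linear_Blinfun_apply)
qed

definition log_domain :: "('d::finite, 'k::finite) point set" where
  "log_domain = {x. (\<forall>k. 0 < 1 + fst (snd (snd x)) $ k) \<and> 0 < 1 + snd (snd (snd x))}"

lemma open_log_domain: "open log_domain"
proof -
  have halfspace: "open {x. 0 < 1 + blinfun_apply l x}" for l :: "('d::finite, 'k::finite) point \<Rightarrow>\<^sub>L real"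
    by (intro open_Collect_less continuous_on_const continuous_on_add
        bounded_linear.continuous_on[OF blinfun.bounded_linear_right] continuous_on_id)
  have "log_domain = (\<Inter>k. {x. 0 < 1 + p_coord k x}) \<inter> {x. 0 < 1 + m_coord x}"
    unfolding log_domain_def by auto
  also have "open \<dots>"
    by (intro open_Int open_INT ballI halfspace) simp
  finally show ?thesis .
qed

lemma log_domain_pos:
  assumes "x \<in> log_domain"
  shows "0 < 1 + p_coord k x" and "0 < 1 + m_coord x"
  using assms by (auto simp: log_domain_def)

lemma log_domain_nonzero:
  assumes "x \<in> log_domain"
  shows "1 + p_coord k x \<noteq> 0" and "1 + m_coord x \<noteq> 0"
  using log_domain_pos[OF assms] by (metis less_irrefl)+

definition time_weight :: "real \<Rightarrow> real \<times> 'a \<Rightarrow> real" where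
  "time_weight c x = exp (c - fst x)"

definition log_term :: "('d::finite, 'k::finite) point \<Rightarrow> real" where
  "log_term x = 1 + (\<Sum>k\<in>UNIV. ln (1 + fst (snd (snd x)) $ k)) + ln (1 + snd (snd (snd x)))"

lemma phi0_eq: "phi0 tg i x = time_weight (tg (Suc i)) x * log_term x"
  by (cases x) (simp add: phi0_def time_weight_def log_term_def)

lemma has_derivative_time_weight:
  "(time_weight c has_derivative (\<lambda>h. - time_weight c x * fst h)) (at x)"
  unfolding time_weight_def[abs_def]
  by (auto intro!: derivative_eq_intros)

lemma has_derivative_one_plus_blinfun:
  "((\<lambda>y. 1 + blinfun_apply l y) has_derivative (\<lambda>h. 0 + l h)) F"
  by (intro has_derivative_add has_derivative_const
      bounded_linear.has_derivative[OF blinfun.bounded_linear_right] has_derivative_ident)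

lemma has_derivative_ln_one_plus:
  fixes l :: "'a::real_normed_vector \<Rightarrow>\<^sub>L real"
  assumes "0 < 1 + blinfun_apply l x"
  shows "((\<lambda>y. ln (1 + blinfun_apply l y)) has_derivative (\<lambda>h. l h / (1 + l x))) (at x)"
  using has_derivative_ln[where g="\<lambda>y. 1 + blinfun_apply l y", OF assms has_derivative_one_plus_blinfun]
  by (rule has_derivative_eq_rhs) (simp add: fun_eq_iff divide_inverse)

lemma has_derivative_log_term:
  assumes "x \<in> log_domain"
  shows "(log_term has_derivative
     (\<lambda>h. (\<Sum>k\<in>UNIV. p_coord k h / (1 + p_coord k x)) + m_coord h / (1 + m_coord x))) (at x)"
proof -
  have "((\<lambda>y. 1 + (\<Sum>k\<in>UNIV. ln (1 + p_coord k y)) + ln (1 + m_coord y)) has_derivative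
      (\<lambda>h. 0 + (\<Sum>k\<in>UNIV. p_coord k h / (1 + p_coord k x)) + m_coord h / (1 + m_coord x))) (at x)"
    by (intro has_derivative_add has_derivative_const has_derivative_sum has_derivative_ln_one_plus
        log_domain_pos[OF assms])
  then show ?thesis
    by (simp add: log_term_def[abs_def])
qed

definition phi0_deriv :: "real \<Rightarrow> ('d::finite, 'k::finite) point \<Rightarrow> ('d, 'k) point \<Rightarrow>\<^sub>L real" where
  "phi0_deriv c x =
     (- (time_weight c x * log_term x)) *\<^sub>R fst_blinfun
     + (\<Sum>k\<in>UNIV. (time_weight c x / (1 + p_coord k x)) *\<^sub>R p_coord k)
     + (time_weight c x / (1 + m_coord x)) *\<^sub>R m_coord"

lemma has_derivative_phi0:
  assumes "x \<in> log_domain"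
  shows "((\<lambda>y. time_weight c y * log_term y) has_derivative phi0_deriv c x) (at x)"
  using has_derivative_mult[OF has_derivative_time_weight has_derivative_log_term[OF assms]]
  by (rule has_derivative_eq_rhs)
    (simp only: fun_eq_iff phi0_deriv_def blinfun.add_left blinfun.sum_left blinfun.scaleR_left
      fst_blinfun.rep_eq; simp add: sum_distrib_left algebra_simps)

definition weight_quotient_deriv ::
  "real \<Rightarrow> real \<times> 'a \<Rightarrow> (real \<times> 'a::real_normed_vector) \<Rightarrow>\<^sub>L real \<Rightarrow> (real \<times> 'a) \<Rightarrow>\<^sub>L real" where
  "weight_quotient_deriv c x l =
     (- (time_weight c x / (1 + l x))) *\<^sub>R fst_blinfun - (time_weight c x / (1 + l x)^2) *\<^sub>R l"

lemma has_derivative_weight_quotient: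
  fixes l :: "(real \<times> 'a::real_normed_vector) \<Rightarrow>\<^sub>L real"
  assumes "1 + l x \<noteq> 0"
  shows "((\<lambda>y. time_weight c y / (1 + l y)) has_derivative weight_quotient_deriv c x l) (at x)"
proof -
  from has_derivative_divide'[OF has_derivative_time_weight has_derivative_one_plus_blinfun assms]
  have "((\<lambda>y. time_weight c y / (1 + l y)) has_derivative
      (\<lambda>h. (- time_weight c x * fst h * (1 + l x) - time_weight c x * (0 + l h)) / ((1 + l x) * (1 + l x)))) (at x)" .
  moreover have "(- w * a * d - w * (0 + b)) / (d * d) = - (w / d) * a - (w / d^2) * b"
    if "d \<noteq> 0" for w a b d :: real
    using that by (simp add: field_simps power2_eq_square)
  ultimately show ?thesis
    by (elim has_derivative_eq_rhs)
      (simp add: fun_eq_iff weight_quotient_deriv_def blinfun.diff_left blinfun.minus_left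
        blinfun.scaleR_left assms)
qed

lemma has_derivative_scaleR_blinfun:
  assumes "(f has_derivative blinfun_apply g) F"
  shows "((\<lambda>x. f x *\<^sub>R l) has_derivative blinfun_apply (blinfun_scaleR_left l o\<^sub>L g)) F"
  using has_derivative_scaleR_left[OF assms, of l]
  by (rule has_derivative_eq_rhs) (simp add: fun_eq_iff)

definition phi0_deriv2 ::
  "real \<Rightarrow> ('d::finite, 'k::finite) point \<Rightarrow> ('d, 'k) point \<Rightarrow>\<^sub>L (('d, 'k) point \<Rightarrow>\<^sub>L real)" where
  "phi0_deriv2 c x =
     (blinfun_scaleR_left fst_blinfun o\<^sub>L - phi0_deriv c x)
     + (\<Sum>k\<in>UNIV. blinfun_scaleR_left (p_coord k) o\<^sub>L weight_quotient_deriv c x (p_coord k))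
     + (blinfun_scaleR_left m_coord o\<^sub>L weight_quotient_deriv c x m_coord)"

lemma has_derivative_phi0_deriv:
  assumes "x \<in> log_domain"
  shows "(phi0_deriv c has_derivative phi0_deriv2 c x) (at x)"
proof -
  have "((\<lambda>y. - (time_weight c y * log_term y)) has_derivative - phi0_deriv c x) (at x)"
    using has_derivative_minus[OF has_derivative_phi0[OF assms]] by (simp add: uminus_blinfun.rep_eq)
  then show ?thesis
    unfolding phi0_deriv_def[abs_def] phi0_deriv2_def blinfun.add_left blinfun.sum_left
    by (intro has_derivative_add has_derivative_sum has_derivative_scaleR_blinfun
        has_derivative_weight_quotient log_domain_nonzero[OF assms])
qed

lemma continuous_on_phi0_deriv2: "continuous_on log_domain (phi0_deriv2 c)"
proof -
  have "continuous_on log_domain (time_weight c)"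
    unfolding time_weight_def[abs_def] by (intro continuous_intros)
  moreover have "continuous_on log_domain log_term"
    unfolding log_term_def[abs_def]
    by (intro continuous_intros ballI log_domain_nonzero[unfolded p_coord_apply m_coord_apply])
  ultimately show ?thesis
    unfolding phi0_deriv2_def[abs_def] phi0_deriv_def weight_quotient_deriv_def
    by (intro continuous_intros ballI power_not_zero log_domain_nonzero)
qed

lemma C2_on_phi0: "C2_on log_domain (phi0 tg i) (phi0_deriv (tg (Suc i))) (phi0_deriv2 (tg (Suc i)))"
  unfolding C2_on_def phi0_eq[abs_def]
  using open_log_domain has_derivative_phi0 has_derivative_phi0_deriv continuous_on_phi0_deriv2
  by blast

lemma phi0_deriv_space:
  "(\<lambda>w. phi0_deriv c (t, z, p, m) (0, w)) = log_grad (time_weight c (t, z, p, m)) p m"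
  by (simp only: fun_eq_iff phi0_deriv_def blinfun.add_left blinfun.sum_left blinfun.scaleR_left
      fst_blinfun.rep_eq p_coord_apply m_coord_apply; simp add: log_grad_def)

lemma phi0_deriv_time:
  "phi0_deriv c x (1, 0) = - (time_weight c x * log_term x)"
  by (simp only: phi0_deriv_def blinfun.add_left blinfun.sum_left blinfun.scaleR_left
      fst_blinfun.rep_eq p_coord_apply m_coord_apply; simp)

lemma phi0_deriv2_space:
  "(\<lambda>w w'. phi0_deriv2 c (t, z, p, m) (0, w) (0, w')) = log_hess (time_weight c (t, z, p, m)) p m"
  by (simp add: fun_eq_iff phi0_deriv2_def phi0_deriv_def weight_quotient_deriv_def log_hess_def
      blinfun.add_left blinfun.minus_left blinfun.diff_left blinfun.sum_left blinfun.scaleR_left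
      sum_negf algebra_simps)

lemma Hop_at_phi0_ge:
  assumes x: "x \<in> intD tg i" and b: "norm (snd ub) = 1"
  shows "1/8 \<le> Hop_at mu sig (\<lambda>p. max 1 p) (\<lambda>m. max 1 m)
    (phi0_deriv (tg (Suc i)) x) (phi0_deriv2 (tg (Suc i)) x) x ub"
proof -
  obtain t z p m where x_eq: "x = (t, z, p, m)"
    by (cases x) auto
  with x have t: "t < tg (Suc i)" and p: "\<And>k. 0 < p $ k" and m: "0 < m"
    by (auto simp: intD_def)
  have "1 \<le> time_weight (tg (Suc i)) x"
    using t by (simp add: time_weight_def x_eq)
  moreover have "1 \<le> log_term x"
    using p m by (simp add: log_term_def x_eq sum_nonneg less_imp_le)
  ultimately show ?thesis
    unfolding Hop_at_def x_eq prod.sel phi0_deriv_space phi0_deriv2_space phi0_deriv_time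
    using p m b by (intro Hop_log_test_ge)
qed

theorem lemma1:
  fixes n i :: nat and T :: real and tg :: "nat \<Rightarrow> real"
    and U :: "(real^'d) set"
    and mu :: "real \<Rightarrow> real^'d \<Rightarrow> real^'d \<Rightarrow> real^'d"
    and sig :: "real \<Rightarrow> real^'d \<Rightarrow> real^'d \<Rightarrow> real^'d^'d"
    and v :: "real \<times> (real^'d) \<times> (real^'k) \<times> real \<Rightarrow> real"
    and \<xi> :: real
  assumes T_pos: "T > 0"
    and grid0: "tg 0 = 0" and gridn: "tg n = T"
    and grid_mono: "\<And>j. j < n \<Longrightarrow> tg j \<le> tg (Suc j)"
    and i_lt: "i < n"
    and card_k: "CARD('k) = n - i"
    and U_compact: "compact U"
    and mu_cont: "continuous_on ({0..T} \<times> UNIV \<times> U) (\<lambda>(t, z, u). mu t z u)"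
    and sig_cont: "continuous_on ({0..T} \<times> UNIV \<times> U) (\<lambda>(t, z, u). sig t z u)"
    and mu_lip: "\<exists>L. \<forall>t\<in>{0..T}. \<forall>u\<in>U. \<forall>z z'. norm (mu t z u - mu t z' u) \<le> L * norm (z - z')"
    and sig_lip: "\<exists>L. \<forall>t\<in>{0..T}. \<forall>u\<in>U. \<forall>z z'. norm (sig t z u - sig t z' u) \<le> L * norm (z - z')"
    and mu_growth: "\<exists>C. \<forall>t\<in>{0..T}. \<forall>u\<in>U. \<forall>z. norm (mu t z u) \<le> C * (1 + norm z)"
    and sig_growth: "\<exists>C. \<forall>t\<in>{0..T}. \<forall>u\<in>U. \<forall>z. norm (sig t z u) \<le> C * (1 + norm z)"
    and v_lsc: "lsc_on (intD tg i) v"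
    and v_super: "visc_sup_ge mu sig U (\<lambda>p. max 1 p) (\<lambda>m. max 1 m) (intD tg i) v 0"
    and xi_pos: "\<xi> > 0"
  shows "visc_sup_ge mu sig U (\<lambda>p. max 1 p) (\<lambda>m. max 1 m) (intD tg i)
           (\<lambda>x. v x + \<xi> * phi0 tg i x) (\<xi> / 8)"
proof -
  have "visc_sup_ge mu sig U (\<lambda>p. max 1 p) (\<lambda>m. max 1 m) (intD tg i)
      (\<lambda>x. v x + \<xi> * phi0 tg i x) (0 + \<xi> * (1/8))"
  proof (rule visc_sup_ge_add_smooth[OF v_super C2_on_phi0])
    show "intD tg i \<subseteq> log_domain"
      by (auto simp: intD_def log_domain_def add_pos_pos)
  qed (use xi_pos Hop_at_phi0_ge in auto)
  then show ?thesis
    by simp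
qed

end
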